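(* Let $\mu$ be a positive integer, $M=2^\mu-1$, and let $S_1,\dots,S_M$ be pairwise disjoint subsets of $\mathbb R^2$ each of which contains balls of arbitrarily large radii. Then there exist measurable sets $\{E_w\}_{w\in W_\mu}$, frequencies $\{\xi_w\}_{w\in W_\mu}\subset\mathbb R^2$ and radii $\{\rho_w\}_{w\in W_\mu}\subset(0,\infty)$ such that: (a) $E_w\subset[0,1]^2$ for every $w\in W_\mu$; $E_\emptyset=[0,1]^2$; for every $w\in W_{\mu-1}$, $E_w$ is the disjoint union of $E_{w0}$ and $E_{w1}$; for each $\ell=0,\dots,\mu-1$, $[0,1]^2$ is the disjoint union of the $E_w$ with $w$ of length $\ell$; and $\sum_{w\in W_\mu}\mathbb 1_{E_w}(x)=\mu$ for every $x\in[0,1]^2$. (b) For every $w\in W_\mu$: $\|\mathbb 1_{E_w}*\phi_{\rho_w}-\mathbb 1_{E_w}\|_{L^2}\le2^{-\mu-10}$; $\int_{E_w}|\cos(\langle\xi_w,x\rangle)|\,dx\ge|E_w|/3$; and $B(\xi_w,\rho_w)\subset S_{\tau(w)}$. (c) For every $w\in W_{\mu-1}$: $\cos(\langle\xi_w,x\rangle)\ge0$ for $x\in E_{w0}$ and $\cos(\langle\xi_w,x\rangle)<0$ for $x\in E_{w1}$.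
   Context: $W_\mu=\{\emptyset\}\cup\bigcup_{\ell=1}^{\mu-1}\{0,1\}^\ell$ (binary words of length at most $\mu-1$); $w0,w1$ denote concatenation. $\tau:W_\mu\to\{1,\dots,2^\mu-1\}$: $\tau(\emptyset)=2^{\mu-1}$, $\tau(w_1\cdots w_\ell)=w_12^{\mu-1}+\dots+w_\ell2^{\mu-\ell}+2^{\mu-\ell-1}$. Fix a nonnegative Schwartz function $\phi$ on $\mathbb R^2$ with $\int\phi=1$ and $\widehat\phi$ supported in the unit ball $B(0,1)$, and put $\phi_\rho(x)=\rho^2\phi(\rho x)$ for $\rho>0$. $B(\xi,\rho)$ is the open ball of center $\xi$ and radius $\rho$. *)

theory Defs
  imports "HOL-Analysis.Analysis"
begin

text \<open>Binary words are bool lists (False = 0, True = 1); w0 = w @ [False], w1 = w @ [True].\<close>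

definition W :: "nat \<Rightarrow> bool list set" where
  "W mu = {w. length w \<le> mu - 1}"

definition tau :: "nat \<Rightarrow> bool list \<Rightarrow> nat" where
  "tau mu w = (\<Sum>i<length w. (if w ! i then 1 else 0) * 2 ^ (mu - 1 - i)) + 2 ^ (mu - length w - 1)"

inductive_set partial_derivs :: "(real^2 \<Rightarrow> real) \<Rightarrow> (real^2 \<Rightarrow> real) set"
  for f :: "real^2 \<Rightarrow> real" where
  base: "f \<in> partial_derivs f"
| step: "g \<in> partial_derivs f \<Longrightarrow> (\<forall>x. g differentiable (at x)) \<Longrightarrow> e \<in> Basis \<Longrightarrow>
         (\<lambda>x. frechet_derivative g (at x) e) \<in> partial_derivs f"

definition schwartz :: "(real^2 \<Rightarrow> real) \<Rightarrow> bool" where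
  "schwartz f \<longleftrightarrow> (\<forall>g\<in>partial_derivs f. (\<forall>x. g differentiable (at x)) \<and>
      (\<forall>k::nat. bounded (range (\<lambda>x. norm x ^ k * g x))))"

definition fourier :: "(real^2 \<Rightarrow> real) \<Rightarrow> real^2 \<Rightarrow> complex" where
  "fourier f xi = (\<integral>x. complex_of_real (f x) * cis (- 2 * pi * (x \<bullet> xi)) \<partial>lborel)"

definition dilate :: "real \<Rightarrow> (real^2 \<Rightarrow> real) \<Rightarrow> real^2 \<Rightarrow> real" where
  "dilate rho f x = rho ^ 2 * f (rho *\<^sub>R x)"

definition conv :: "(real^2 \<Rightarrow> real) \<Rightarrow> (real^2 \<Rightarrow> real) \<Rightarrow> real^2 \<Rightarrow> real" where
  "conv f g x = (\<integral>y. f y * g (x - y) \<partial>lebesgue)"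

end

theory Submission
  imports Defs
begin

text \<open>
  The sets \<open>E\<^sub>w\<close> are the cells cut out of the unit square by the signs of
  \<open>cos (\<xi>\<^sub>v \<bullet> x)\<close> along the proper prefixes \<open>v\<close> of \<open>w\<close>; the partition
  properties (a) and the sign conditions (c) then hold whatever the frequencies are, and the
  frequencies and radii are chosen by recursion on the length of \<open>w\<close>.
  Each cell is a Borel set whose boundary is null (the zero set of \<open>cos (\<xi> \<bullet> x)\<close> is a
  countable union of lines), so \<open>\<parallel>1\<^sub>E(\<cdot> - z) - 1\<^sub>E\<parallel>\<^sub>1 \<rightarrow> 0\<close> as \<open>z \<rightarrow> 0\<close> by dominated
  convergence. This gives the \<open>L\<^sup>2\<close> bound for \<open>1\<^sub>E * \<phi>\<^sub>\<rho>\<close> once \<open>\<rho>\<close> is large; and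
  translating by \<open>z\<close> with \<open>\<eta> \<bullet> z = \<pi>\<close> flips the sign of \<open>cos (\<eta> \<bullet> x)\<close>, so
  \<open>\<integral>\<^sub>E cos (\<eta> \<bullet> x) \<rightarrow> 0\<close> as \<open>|\<eta>| \<rightarrow> \<infinity>\<close>. Together with
  \<open>|cos t| \<ge> (1 + cos 2t) / 2\<close> this gives \<open>\<integral>\<^sub>E |cos (\<xi> \<bullet> x)| \<ge> |E| / 3\<close> for all large
  \<open>|\<xi>|\<close>, and a large ball inside \<open>S\<^bsub>\<tau>(w)\<^esub>\<close> contains a ball \<open>B(\<xi>, \<rho>)\<close> with \<open>|\<xi>|\<close> as
  large as needed.
\<close>

section \<open>Translation continuity for Jordan measurable Borel sets\<close>

definition jordan_borel :: "'a::euclidean_space set \<Rightarrow> bool" where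
  "jordan_borel E \<longleftrightarrow> E \<in> sets borel \<and> bounded E \<and> frontier E \<in> null_sets lborel"

lemma null_sets_lborel_if_closed_negligible:
  assumes "closed S" "negligible S"
  shows "S \<in> null_sets lborel"
  using assms null_sets_completion_iff[of S lborel] by (simp add: borel_closed negligible_iff_null_sets)

lemma jordan_borel_cbox: "jordan_borel (cbox a b)"
  unfolding jordan_borel_def
  using null_sets_lborel_if_closed_negligible[OF _ negligible_convex_frontier[OF convex_box(1)]] by auto

lemma jordan_borel_Int:
  assumes "jordan_borel E" "F \<in> sets borel" "frontier F \<in> null_sets lborel"
  shows "jordan_borel (E \<inter> F)"
proof -
  have "frontier (E \<inter> F) \<in> null_sets lborel"
    by (rule null_sets_subset[of "frontier E \<union> frontier F"])
       (use assms frontier_Int_subset[of E F] in \<open>auto simp: jordan_borel_def borel_closed\<close>)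
  then show ?thesis
    using assms by (auto simp: jordan_borel_def bounded_Int)
qed

lemma integrable_indicator_bounded:
  fixes E :: "'a::euclidean_space set"
  assumes "E \<in> sets borel" "bounded E"
  shows "integrable lborel (indicator E :: 'a \<Rightarrow> real)"
  using assms emeasure_bounded_finite by (intro integrable_real_indicator) auto

lemma integrable_indicator_translate:
  fixes E :: "'a::euclidean_space set"
  assumes [measurable]: "E \<in> sets borel" and "bounded E"
  shows "integrable lborel (\<lambda>x. indicator E (x - z) :: real)"
proof -
  have "(\<lambda>x. indicator E (x - z) :: real) = indicator ((+) z ` E)"
    by (force simp: indicator_def)
  moreover have "(+) z ` E \<in> sets borel"
  proof -
    have "(+) z ` E = {x. x - z \<in> E}" by force
    then show ?thesis by simp
  qed
  ultimately show ?thesis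
    using assms integrable_indicator_bounded bounded_translation by metis
qed

lemma integral_lborel_translate:
  fixes f :: "'a::euclidean_space \<Rightarrow> real"
  assumes [measurable]: "f \<in> borel_measurable borel"
  shows "(\<integral>x. f (x + z) \<partial>lborel) = (\<integral>x. f x \<partial>lborel)"
proof -
  have "(\<integral>x. f x \<partial>lborel) = (\<integral>x. f x \<partial>distr lborel borel ((+) z))"
    by (simp add: lborel_distr_plus)
  also have "\<dots> = (\<integral>x. f (z + x) \<partial>lborel)"
    by (subst integral_distr) auto
  finally show ?thesis
    by (simp add: add.commute)
qed

definition translation_defect :: "'a::euclidean_space set \<Rightarrow> 'a \<Rightarrow> real" where
  "translation_defect E z = (\<integral>x. \<bar>indicator E (x - z) - indicator E x :: real\<bar> \<partial>lborel)"

lemma integrable_translation_defect: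
  fixes E :: "'a::euclidean_space set"
  assumes [measurable]: "E \<in> sets borel" and "bounded E"
  shows "integrable lborel (\<lambda>x. \<bar>indicator E (x - z) - indicator E x :: real\<bar>)"
  by (intro Bochner_Integration.integrable_abs Bochner_Integration.integrable_diff
      integrable_indicator_translate[OF assms] integrable_indicator_bounded[OF assms])

lemma translation_defect_nonneg: "translation_defect E z \<ge> 0"
  unfolding translation_defect_def by (rule Bochner_Integration.integral_nonneg) simp

lemma translation_defect_le:
  fixes E :: "'a::euclidean_space set"
  assumes [measurable]: "E \<in> sets borel" and "bounded E"
  shows "translation_defect E z \<le> 2 * measure lborel E"
proof -
  have "translation_defect E z \<le> (\<integral>x. indicator E (x - z) + indicator E x \<partial>lborel)"
    unfolding translation_defect_def
    by (intro integral_mono Bochner_Integration.integrable_add integrable_translation_defect[OF assms]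
        integrable_indicator_translate[OF assms] integrable_indicator_bounded[OF assms])
      (auto simp: indicator_def)
  also have "\<dots> = 2 * measure lborel E"
    using integrable_indicator_translate[OF assms] integrable_indicator_bounded[OF assms] assms
      integral_lborel_translate[of "\<lambda>x. indicator E (x - z) :: real" z]
    by (simp add: emeasure_bounded_finite)
  finally show ?thesis .
qed

lemma translation_defect_LIMSEQ_0:
  fixes E :: "'a::euclidean_space set"
  assumes "jordan_borel E" and z0: "z \<longlonglongrightarrow> 0" and z_small: "\<And>i. norm (z i) < 1"
  shows "(\<lambda>i. translation_defect E (z i)) \<longlonglongrightarrow> 0"
proof -
  have E[measurable]: "E \<in> sets borel" and fr: "frontier E \<in> null_sets lborel"
    using assms by (auto simp: jordan_borel_def)
  obtain b where b: "\<And>x. x \<in> E \<Longrightarrow> norm x \<le> b"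
    using assms unfolding jordan_borel_def bounded_pos by blast
  have "(\<lambda>i. \<integral>x. \<bar>indicator E (x - z i) - indicator E x :: real\<bar> \<partial>lborel)
      \<longlonglongrightarrow> (\<integral>x. 0 \<partial>(lborel :: 'a measure))"
  proof (rule integral_dominated_convergence[where w="indicator (cball 0 (b + 1))"])
    show "AE x in lborel. (\<lambda>i. \<bar>indicator E (x - z i) - indicator E x :: real\<bar>) \<longlonglongrightarrow> 0"
      using AE_not_in[OF fr]
    proof eventually_elim
      case (elim x)
      have "(\<lambda>i. x - z i) \<longlonglongrightarrow> x"
        using tendsto_diff[OF tendsto_const z0] by simp
      then have "(\<lambda>i. indicator E (x - z i) :: real) \<longlonglongrightarrow> indicator E x"
        using elim isCont_indicator isCont_tendsto_compose by blast
      then show ?case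
        by (intro tendsto_rabs_zero LIM_zero)
    qed
    show "AE x in lborel. norm \<bar>indicator E (x - z i) - indicator E x :: real\<bar>
        \<le> indicator (cball 0 (b + 1)) x" for i
    proof (rule AE_I2)
      fix x :: 'a
      have "x \<notin> E \<and> x - z i \<notin> E" if "norm x > b + 1"
        using that b[of x] b[of "x - z i"] z_small[of i] norm_triangle_sub[of x "z i"] by force
      then show "norm \<bar>indicator E (x - z i) - indicator E x :: real\<bar>
          \<le> indicator (cball 0 (b + 1)) x"
        by (cases "norm x > b + 1") (auto simp: indicator_def)
    qed
  qed (simp_all add: integrable_indicator_bounded)
  then show ?thesis
    by (simp add: translation_defect_def)
qed

lemma translation_defect_tendsto_0:
  fixes E :: "'a::euclidean_space set"
  assumes "jordan_borel E"
  shows "(translation_defect E \<longlongrightarrow> 0) (at 0)"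
proof -
  have "(translation_defect E \<longlongrightarrow> 0) (at 0 within ball 0 1)"
    unfolding tendsto_at_iff_sequentially comp_def
    using translation_defect_LIMSEQ_0[OF assms] by simp
  then show ?thesis
    by (subst (asm) tendsto_within_open) auto
qed

section \<open>Oscillatory integrals over Jordan measurable sets\<close>

lemma abs_integral_cos_le_translation_defect:
  fixes E :: "'a::euclidean_space set"
  assumes E[measurable]: "E \<in> sets borel" and bdd: "bounded E" and z: "\<eta> \<bullet> z = pi"
  shows "2 * \<bar>\<integral>x. indicator E x * cos (\<eta> \<bullet> x) \<partial>lborel\<bar> \<le> translation_defect E z"
proof -
  define A where "A = (\<integral>x. indicator E x * cos (\<eta> \<bullet> x) \<partial>lborel)"
  have int_E: "integrable lborel (\<lambda>x. indicator E x * cos (\<eta> \<bullet> x))"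
    by (rule Bochner_Integration.integrable_bound[OF integrable_indicator_bounded[OF E bdd]])
      (auto simp: indicator_def)
  have int_Ez: "integrable lborel (\<lambda>x. indicator E (x - z) * cos (\<eta> \<bullet> x))"
    by (rule Bochner_Integration.integrable_bound[OF integrable_indicator_translate[OF E bdd]])
      (auto simp: indicator_def)
  have "(\<integral>x. indicator E (x - z) * cos (\<eta> \<bullet> x) \<partial>lborel) = (\<integral>x. indicator E x * cos (\<eta> \<bullet> x + pi) \<partial>lborel)"
    using integral_lborel_translate[of "\<lambda>x. indicator E (x - z) * cos (\<eta> \<bullet> x)" z]
    by (simp add: inner_add_right z)
  also have "\<dots> = - A"
    by (simp add: A_def cos_periodic_pi)
  finally have "2 * A = (\<integral>x. (indicator E x - indicator E (x - z)) * cos (\<eta> \<bullet> x) \<partial>lborel)"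
    using int_E int_Ez by (simp add: left_diff_distrib A_def)
  also have "\<bar>\<dots>\<bar> \<le> (\<integral>x. \<bar>indicator E (x - z) - indicator E x :: real\<bar> \<partial>lborel)"
    by (rule integral_abs_bound[THEN order_trans], rule integral_mono)
      (auto simp: integrable_translation_defect[OF E bdd] indicator_def abs_mult
        intro!: Bochner_Integration.integrable_bound[OF integrable_translation_defect[OF E bdd]])
  finally show ?thesis
    by (simp add: A_def translation_defect_def)
qed

lemma integral_indicator_cos_tendsto_0:
  fixes E :: "'a::euclidean_space set"
  assumes "jordan_borel E"
  shows "((\<lambda>\<eta>. \<integral>x. indicator E x * cos (\<eta> \<bullet> x) \<partial>lborel) \<longlongrightarrow> 0) at_infinity"
proof (rule tendstoI)
  fix e :: real
  assume "e > 0"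
  have E: "E \<in> sets borel" "bounded E"
    using assms by (auto simp: jordan_borel_def)
  obtain d where "d > 0" and d: "\<And>z. z \<noteq> 0 \<Longrightarrow> norm z < d \<Longrightarrow> translation_defect E z < 2 * e"
    using LIM_D[OF translation_defect_tendsto_0[OF assms], of "2 * e"] \<open>e > 0\<close>
    by (auto simp: translation_defect_nonneg)
  show "\<forall>\<^sub>F \<eta> in at_infinity. dist (\<integral>x. indicator E x * cos (\<eta> \<bullet> x) \<partial>lborel) 0 < e"
    unfolding eventually_at_infinity
  proof (intro exI allI impI)
    fix \<eta> :: 'a
    assume \<eta>: "pi / d + 1 \<le> norm \<eta>"
    moreover have "0 < pi / d"
      using \<open>d > 0\<close> by simp
    ultimately have "pi / d < norm \<eta>" and "\<eta> \<noteq> 0"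
      by auto
    then have "pi / norm \<eta> < d"
      using \<open>d > 0\<close> by (simp add: field_simps)
    define z where "z = (pi / (norm \<eta>)\<^sup>2) *\<^sub>R \<eta>"
    have "\<eta> \<bullet> z = pi" "z \<noteq> 0" "norm z = pi / norm \<eta>"
      using \<open>\<eta> \<noteq> 0\<close> by (auto simp: z_def power2_norm_eq_inner[symmetric] power2_eq_square)
    then have "2 * \<bar>\<integral>x. indicator E x * cos (\<eta> \<bullet> x) \<partial>lborel\<bar> < 2 * e"
      using abs_integral_cos_le_translation_defect[OF E] d \<open>pi / norm \<eta> < d\<close> by fastforce
    then show "dist (\<integral>x. indicator E x * cos (\<eta> \<bullet> x) \<partial>lborel) 0 < e"
      by simp
  qed
qed

lemma cos_double_le_abs_cos: "(1 + cos (2 * t)) / 2 \<le> \<bar>cos t :: real\<bar>"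
proof -
  have "\<bar>cos t\<bar> * \<bar>cos t\<bar> \<le> \<bar>cos t\<bar>"
    by (rule mult_left_le) (simp_all add: abs_cos_le_one)
  then show ?thesis
    by (simp add: cos_double_cos power2_eq_square abs_mult_self_eq)
qed

lemma set_integral_abs_cos_ge:
  fixes E :: "'a::euclidean_space set"
  assumes E[measurable]: "E \<in> sets borel" and bdd: "bounded E"
  shows "(\<integral>x\<in>E. \<bar>cos (\<xi> \<bullet> x)\<bar> \<partial>lebesgue)
    \<ge> (measure lborel E + (\<integral>x. indicator E x * cos ((2 *\<^sub>R \<xi>) \<bullet> x) \<partial>lborel)) / 2"
proof -
  have int_E: "integrable lborel (indicator E :: 'a \<Rightarrow> real)"
    by (rule integrable_indicator_bounded[OF E bdd])
  have int_cos: "integrable lborel (\<lambda>x. indicator E x * cos (2 * (\<xi> \<bullet> x)))"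
    by (rule Bochner_Integration.integrable_bound[OF int_E]) (auto simp: indicator_def)
  have "(measure lborel E + (\<integral>x. indicator E x * cos ((2 *\<^sub>R \<xi>) \<bullet> x) \<partial>lborel)) / 2
      = (\<integral>x. (indicator E x + indicator E x * cos (2 * (\<xi> \<bullet> x))) / 2 \<partial>lborel)"
    using int_E int_cos emeasure_bounded_finite[OF bdd] by simp
  also have "\<dots> \<le> (\<integral>x. indicator E x * \<bar>cos (\<xi> \<bullet> x)\<bar> \<partial>lborel)"
  proof (rule integral_mono)
    show "integrable lborel (\<lambda>x. indicator E x * \<bar>cos (\<xi> \<bullet> x)\<bar>)"
      by (rule Bochner_Integration.integrable_bound[OF int_E]) (auto simp: indicator_def)
    show "(indicator E x + indicator E x * cos (2 * (\<xi> \<bullet> x))) / 2 \<le> indicator E x * \<bar>cos (\<xi> \<bullet> x)\<bar>"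
      for x
      using cos_double_le_abs_cos[of "\<xi> \<bullet> x"] by (simp add: indicator_def)
  qed (use int_E int_cos in simp)
  also have "\<dots> = (\<integral>x\<in>E. \<bar>cos (\<xi> \<bullet> x)\<bar> \<partial>lebesgue)"
    unfolding set_lebesgue_integral_def by (simp add: integral_completion)
  finally show ?thesis .
qed

lemma set_integral_abs_cos_eventually_ge:
  fixes E :: "'a::euclidean_space set"
  assumes "jordan_borel E"
  shows "\<forall>\<^sub>F \<xi> in at_infinity. (\<integral>x\<in>E. \<bar>cos (\<xi> \<bullet> x)\<bar> \<partial>lebesgue) \<ge> measure lebesgue E / 3"
proof -
  have E[measurable]: "E \<in> sets borel" and bdd: "bounded E"
    using assms by (auto simp: jordan_borel_def)
  define m where "m = measure lborel E"
  have "measure lebesgue E = m"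
    by (simp add: m_def)
  have "m \<ge> 0"
    by (simp add: m_def)
  show ?thesis
  proof (cases "m = 0")
    case True
    have "(\<integral>x\<in>E. \<bar>cos (\<xi> \<bullet> x)\<bar> \<partial>lebesgue) \<ge> 0" for \<xi> :: 'a
      unfolding set_lebesgue_integral_def by (rule Bochner_Integration.integral_nonneg) simp
    then show ?thesis
      using True \<open>measure lebesgue E = m\<close> by simp
  next
    case False
    obtain b where b: "\<And>\<eta>. norm \<eta> \<ge> b \<Longrightarrow> \<bar>\<integral>x. indicator E x * cos (\<eta> \<bullet> x) \<partial>lborel\<bar> < m / 3"
      using tendstoD[OF integral_indicator_cos_tendsto_0[OF assms], of "m / 3"] False \<open>m \<ge> 0\<close>
      by (auto simp: eventually_at_infinity)
    show ?thesis
      unfolding eventually_at_infinity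
    proof (intro exI allI impI)
      fix \<xi> :: 'a
      assume "b / 2 \<le> norm \<xi>"
      define A where "A = (\<integral>x. indicator E x * cos ((2 *\<^sub>R \<xi>) \<bullet> x) \<partial>lborel)"
      have "\<bar>A\<bar> < m / 3"
        unfolding A_def by (intro b) (use \<open>b / 2 \<le> norm \<xi>\<close> in simp)
      moreover have "(m + A) / 2 \<le> (\<integral>x\<in>E. \<bar>cos (\<xi> \<bullet> x)\<bar> \<partial>lebesgue)"
        using set_integral_abs_cos_ge[OF E bdd, of \<xi>] unfolding A_def m_def .
      ultimately show "(\<integral>x\<in>E. \<bar>cos (\<xi> \<bullet> x)\<bar> \<partial>lebesgue) \<ge> measure lebesgue E / 3"
        using \<open>measure lebesgue E = m\<close> by (simp add: abs_less_iff)
    qed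
  qed
qed

section \<open>Cells cut out by the signs of cosines\<close>

lemma frontier_Collect_less_0_subset:
  fixes f :: "'a::topological_space \<Rightarrow> real"
  assumes "continuous_on UNIV f"
  shows "frontier {x. f x < 0} \<subseteq> {x. f x = 0}"
proof -
  have "closure {x. f x < 0} \<subseteq> {x. f x \<le> 0}"
    using assms by (intro closure_minimal closed_Collect_le continuous_intros) auto
  moreover have "interior {x. f x < 0} = {x. f x < 0}"
    using assms by (intro interior_open open_Collect_less continuous_intros)
  ultimately show ?thesis
    by (auto simp: frontier_def)
qed

lemma null_frontier_cos_sign:
  fixes \<xi> :: "'a::euclidean_space"
  assumes "\<xi> \<noteq> 0"
  shows "frontier {x. (cos (\<xi> \<bullet> x) < 0) = b} \<in> null_sets lborel"
proof -
  have "{x. cos (\<xi> \<bullet> x) = 0} = (\<Union>i::int. {x. \<xi> \<bullet> x = real_of_int i * pi + pi / 2})"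
    by (auto simp: cos_zero_iff_int2)
  then have "negligible {x. cos (\<xi> \<bullet> x) = 0}"
    using assms by (auto intro!: negligible_hyperplane)
  then have zeros: "{x. cos (\<xi> \<bullet> x) = 0} \<in> null_sets lborel"
    by (intro null_sets_lborel_if_closed_negligible closed_Collect_eq continuous_intros)
  have "frontier {x. cos (\<xi> \<bullet> x) < 0} \<in> null_sets lborel"
    by (rule null_sets_subset[OF zeros])
      (auto intro!: frontier_Collect_less_0_subset continuous_intros simp: borel_closed)
  moreover have "{x. (cos (\<xi> \<bullet> x) < 0) = b} = (if b then {x. cos (\<xi> \<bullet> x) < 0} else - {x. cos (\<xi> \<bullet> x) < 0})"
    by auto
  ultimately show ?thesis
    by simp
qed

definition sign_cell :: "'a set \<Rightarrow> (bool list \<Rightarrow> 'a::real_inner) \<Rightarrow> bool list \<Rightarrow> 'a set" where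
  "sign_cell E0 \<xi> w = E0 \<inter> {x. \<forall>i<length w. (cos (\<xi> (take i w) \<bullet> x) < 0) = w ! i}"

lemma sign_cell_Nil [simp]: "sign_cell E0 \<xi> [] = E0"
  by (simp add: sign_cell_def)

lemma sign_cell_subset: "sign_cell E0 \<xi> w \<subseteq> E0"
  by (simp add: sign_cell_def)

lemma sign_cell_snoc: "sign_cell E0 \<xi> (w @ [b]) = sign_cell E0 \<xi> w \<inter> {x. (cos (\<xi> w \<bullet> x) < 0) = b}"
  unfolding sign_cell_def by (auto simp: less_Suc_eq nth_append)

lemma sign_cell_cong:
  assumes "\<And>v. length v < length w \<Longrightarrow> \<xi> v = \<xi>' v"
  shows "sign_cell E0 \<xi> w = sign_cell E0 \<xi>' w"
  unfolding sign_cell_def using assms by auto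

primrec sign_word :: "(bool list \<Rightarrow> 'a::real_inner) \<Rightarrow> 'a \<Rightarrow> nat \<Rightarrow> bool list" where
  "sign_word \<xi> x 0 = []"
| "sign_word \<xi> x (Suc n) = sign_word \<xi> x n @ [cos (\<xi> (sign_word \<xi> x n) \<bullet> x) < 0]"

lemma length_sign_word [simp]: "length (sign_word \<xi> x n) = n"
  by (induction n) auto

lemma mem_sign_cell_iff: "x \<in> sign_cell E0 \<xi> w \<longleftrightarrow> x \<in> E0 \<and> sign_word \<xi> x (length w) = w"
  by (induction w rule: rev_induct) (auto simp: sign_cell_snoc)

lemma Union_sign_cell: "(\<Union>w\<in>{w. length w = n}. sign_cell E0 \<xi> w) = E0"
proof
  show "E0 \<subseteq> (\<Union>w\<in>{w. length w = n}. sign_cell E0 \<xi> w)"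
  proof
    fix x assume "x \<in> E0"
    then have "x \<in> sign_cell E0 \<xi> (sign_word \<xi> x n)"
      by (simp add: mem_sign_cell_iff)
    then show "x \<in> (\<Union>w\<in>{w. length w = n}. sign_cell E0 \<xi> w)"
      by force
  qed
qed (auto simp: mem_sign_cell_iff)

lemma sign_cell_disjoint:
  "length v = length w \<Longrightarrow> v \<noteq> w \<Longrightarrow> sign_cell E0 \<xi> v \<inter> sign_cell E0 \<xi> w = {}"
  by (auto simp: mem_sign_cell_iff)

lemma sum_indicator_sign_cell:
  assumes "x \<in> E0"
  shows "(\<Sum>w\<in>{w. length w < n}. indicator (sign_cell E0 \<xi> w) x) = real n"
proof -
  have fin: "finite {w :: bool list. length w < n}"
    by (rule finite_subset[OF _ finite_lists_length_le[of UNIV n]]) auto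
  have cells_of_x: "w \<in> sign_word \<xi> x ` {..<n}" if "length w < n" "x \<in> sign_cell E0 \<xi> w" for w
    using that by (metis lessThan_iff image_eqI mem_sign_cell_iff)
  have "inj (sign_word \<xi> x)"
    by (metis injI length_sign_word)
  have "(\<Sum>w\<in>{w. length w < n}. indicator (sign_cell E0 \<xi> w) x)
      = (\<Sum>w\<in>sign_word \<xi> x ` {..<n}. indicator (sign_cell E0 \<xi> w) x :: real)"
    using fin cells_of_x by (intro sum.mono_neutral_right) (auto split: split_indicator)
  also have "\<dots> = (\<Sum>i<n. indicator (sign_cell E0 \<xi> (sign_word \<xi> x i)) x)"
    using \<open>inj (sign_word \<xi> x)\<close> by (simp add: sum.reindex inj_on_subset)
  also have "\<dots> = real n"
    using assms by (simp add: mem_sign_cell_iff)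
  finally show ?thesis .
qed

lemma jordan_borel_sign_cell:
  assumes "jordan_borel E0" and "\<And>v. length v < length w \<Longrightarrow> \<xi> v \<noteq> 0"
  shows "jordan_borel (sign_cell E0 \<xi> w)"
  using assms(2)
proof (induction w rule: rev_induct)
  case Nil
  then show ?case
    using assms(1) by simp
next
  case (snoc b w)
  then have "jordan_borel (sign_cell E0 \<xi> w)" and "\<xi> w \<noteq> 0"
    by auto
  then show ?case
    unfolding sign_cell_snoc by (intro jordan_borel_Int null_frontier_cos_sign) auto
qed

section \<open>Mollification in \<open>L\<^sup>2\<close>\<close>

lemma nn_integral_lborel_affine:
  fixes f :: "'a::euclidean_space \<Rightarrow> ennreal"
  assumes [measurable]: "f \<in> borel_measurable borel" and c: "c \<noteq> 0"
  shows "(\<integral>\<^sup>+ x. f x \<partial>lborel) = ennreal (\<bar>c\<bar> ^ DIM('a)) * (\<integral>\<^sup>+ y. f (t + c *\<^sub>R y) \<partial>lborel)"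
proof -
  have "(\<integral>\<^sup>+ x. f x \<partial>lborel)
      = (\<integral>\<^sup>+ x. f x \<partial>density (distr lborel borel (\<lambda>x. t + c *\<^sub>R x)) (\<lambda>_. \<bar>c\<bar> ^ DIM('a)))"
    using arg_cong[OF lborel_affine[OF c, of t], of "\<lambda>M. nn_integral M f"] by simp
  also have "\<dots> = (\<integral>\<^sup>+ x. ennreal (\<bar>c\<bar> ^ DIM('a)) * f x \<partial>distr lborel borel (\<lambda>x. t + c *\<^sub>R x))"
    by (subst nn_integral_density) auto
  also have "\<dots> = (\<integral>\<^sup>+ y. ennreal (\<bar>c\<bar> ^ DIM('a)) * f (t + c *\<^sub>R y) \<partial>lborel)"
    by (subst nn_integral_distr) auto
  also have "\<dots> = ennreal (\<bar>c\<bar> ^ DIM('a)) * (\<integral>\<^sup>+ y. f (t + c *\<^sub>R y) \<partial>lborel)"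
    by (rule nn_integral_cmult) simp
  finally show ?thesis .
qed

lemma nn_integral_dilate_substitution:
  fixes \<phi> h :: "real^2 \<Rightarrow> real"
  assumes [measurable]: "\<phi> \<in> borel_measurable borel" "h \<in> borel_measurable borel" and "\<rho> > 0"
  shows "(\<integral>\<^sup>+ y. ennreal (h y * dilate \<rho> \<phi> (x - y)) \<partial>lborel)
       = (\<integral>\<^sup>+ u. ennreal (h (x - inverse \<rho> *\<^sub>R u) * \<phi> u) \<partial>lborel)"
proof -
  have "(\<integral>\<^sup>+ y. ennreal (h y * dilate \<rho> \<phi> (x - y)) \<partial>lborel)
      = ennreal ((inverse \<rho>)\<^sup>2) * (\<integral>\<^sup>+ u. ennreal (h (x - inverse \<rho> *\<^sub>R u) * dilate \<rho> \<phi> (inverse \<rho> *\<^sub>R u)) \<partial>lborel)"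
    using nn_integral_lborel_affine[of "\<lambda>y. ennreal (h y * dilate \<rho> \<phi> (x - y))" "- inverse \<rho>" x] \<open>\<rho> > 0\<close>
    by (simp add: dilate_def)
  also have "\<dots> = (\<integral>\<^sup>+ u. ennreal ((inverse \<rho>)\<^sup>2 * (h (x - inverse \<rho> *\<^sub>R u) * dilate \<rho> \<phi> (inverse \<rho> *\<^sub>R u))) \<partial>lborel)"
    by (subst nn_integral_cmult[symmetric]) (auto simp: dilate_def ennreal_mult')
  also have "\<dots> = (\<integral>\<^sup>+ u. ennreal (h (x - inverse \<rho> *\<^sub>R u) * \<phi> u) \<partial>lborel)"
    using \<open>\<rho> > 0\<close> by (simp add: dilate_def power2_eq_square field_simps)
  finally show ?thesis .
qed

lemma power2_integral_le_integral_abs: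
  fixes p g :: "'a \<Rightarrow> real"
  assumes p: "integrable M p" "\<And>y. p y \<ge> 0" "(\<integral>y. p y \<partial>M) = 1"
    and g[measurable]: "g \<in> borel_measurable M" "\<And>y. \<bar>g y\<bar> \<le> 1"
  shows "(\<integral>y. g y * p y \<partial>M)\<^sup>2 \<le> (\<integral>y. \<bar>g y\<bar> * p y \<partial>M)"
proof -
  define A where "A = (\<integral>y. g y * p y \<partial>M)"
  define B where "B = (\<integral>y. \<bar>g y\<bar> * p y \<partial>M)"
  have [measurable]: "p \<in> borel_measurable M"
    using p(1) by auto
  have int_abs: "integrable M (\<lambda>y. \<bar>g y\<bar> * p y)"
    by (rule Bochner_Integration.integrable_bound[OF p(1)])
      (use p(2) g(2) in \<open>auto intro!: mult_left_le_one_le simp: abs_mult\<close>)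
  have "\<bar>A\<bar> \<le> B"
    using integral_abs_bound[of M "\<lambda>y. g y * p y"] p(2) by (simp add: A_def B_def abs_mult)
  moreover have "B \<le> 1"
    using integral_mono[OF int_abs p(1)] p(2,3) g(2) by (simp add: B_def mult_left_le_one_le)
  ultimately have "\<bar>A\<bar> * \<bar>A\<bar> \<le> B"
    using mult_left_le[of "\<bar>A\<bar>" "\<bar>A\<bar>"] by linarith
  then show ?thesis
    by (simp add: A_def B_def power2_eq_square abs_mult_self_eq)
qed

lemma dilate_reflect_probability_density:
  fixes \<phi> :: "real^2 \<Rightarrow> real"
  assumes \<phi>: "\<phi> \<in> borel_measurable borel" and \<phi>_nonneg: "\<And>y. \<phi> y \<ge> 0"
    and \<phi>_int: "integrable lborel \<phi>" "(\<integral>x. \<phi> x \<partial>lborel) = 1" and "\<rho> > 0"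
  shows "integrable lborel (\<lambda>y. dilate \<rho> \<phi> (x - y))" and "(\<integral>y. dilate \<rho> \<phi> (x - y) \<partial>lborel) = 1"
proof -
  have nonneg: "dilate \<rho> \<phi> (x - y) \<ge> 0" for y
    using \<phi>_nonneg \<open>\<rho> > 0\<close> by (simp add: dilate_def)
  have "(\<integral>\<^sup>+ y. ennreal (dilate \<rho> \<phi> (x - y)) \<partial>lborel) = (\<integral>\<^sup>+ u. ennreal (\<phi> u) \<partial>lborel)"
    using nn_integral_dilate_substitution[OF \<phi>, of "\<lambda>_. 1"] \<open>\<rho> > 0\<close> by simp
  also have "\<dots> = 1"
    using nn_integral_eq_integral[OF \<phi>_int(1)] \<phi>_nonneg \<phi>_int(2) by simp
  finally have nn_1: "(\<integral>\<^sup>+ y. ennreal (dilate \<rho> \<phi> (x - y)) \<partial>lborel) = 1" .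
  have [measurable]: "dilate \<rho> \<phi> \<in> borel_measurable borel"
    using \<phi> unfolding dilate_def[abs_def] by measurable
  show int: "integrable lborel (\<lambda>y. dilate \<rho> \<phi> (x - y))"
    using nn_1 by (intro integrableI_nn_integral_finite[where x=1]) (auto simp: nonneg)
  show "(\<integral>y. dilate \<rho> \<phi> (x - y) \<partial>lborel) = 1"
    using nn_integral_eq_integral[OF int] nonneg nn_1 by simp
qed

lemma mollification_pointwise_error_le:
  fixes \<phi> :: "real^2 \<Rightarrow> real" and E :: "(real^2) set"
  assumes \<phi>[measurable]: "\<phi> \<in> borel_measurable borel" and \<phi>_nonneg: "\<And>y. \<phi> y \<ge> 0"
    and \<phi>_int: "integrable lborel \<phi>" "(\<integral>x. \<phi> x \<partial>lborel) = 1"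
    and E[measurable]: "E \<in> sets borel" and "\<rho> > 0"
  shows "ennreal ((conv (indicator E) (dilate \<rho> \<phi>) x - indicator E x)\<^sup>2)
    \<le> (\<integral>\<^sup>+ u. ennreal (\<bar>indicator E (x - inverse \<rho> *\<^sub>R u) - indicator E x\<bar> * \<phi> u) \<partial>lborel)"
proof -
  define p where "p y = dilate \<rho> \<phi> (x - y)" for y
  define g where "g y = (indicator E y - indicator E x :: real)" for y
  have [measurable]: "dilate \<rho> \<phi> \<in> borel_measurable borel"
    unfolding dilate_def[abs_def] by measurable
  have [measurable]: "p \<in> borel_measurable borel" "g \<in> borel_measurable borel"
    unfolding p_def g_def by measurable
  have p_nonneg: "p y \<ge> 0" for y
    using \<phi>_nonneg \<open>\<rho> > 0\<close> by (simp add: p_def dilate_def)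
  have p_int: "integrable lborel p" and p_1: "(\<integral>y. p y \<partial>lborel) = 1"
    unfolding p_def using dilate_reflect_probability_density[OF \<phi> \<phi>_nonneg \<phi>_int \<open>\<rho> > 0\<close>] by auto
  have "conv (indicator E) (dilate \<rho> \<phi>) x - indicator E x = (\<integral>y. g y * p y \<partial>lborel)"
  proof -
    have "conv (indicator E) (dilate \<rho> \<phi>) x = (\<integral>y. indicator E y * p y \<partial>lborel)"
      unfolding conv_def p_def by (rule integral_completion) measurable
    moreover have "integrable lborel (\<lambda>y. indicator E y * p y)"
      by (rule Bochner_Integration.integrable_bound[OF p_int]) (auto simp: p_nonneg indicator_def)
    ultimately show ?thesis
      using p_int p_1 by (simp add: g_def left_diff_distrib)
  qed
  then have "(conv (indicator E) (dilate \<rho> \<phi>) x - indicator E x)\<^sup>2 \<le> (\<integral>y. \<bar>g y\<bar> * p y \<partial>lborel)"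
    using power2_integral_le_integral_abs[OF p_int p_nonneg p_1] by (simp add: g_def indicator_def)
  then have "ennreal ((conv (indicator E) (dilate \<rho> \<phi>) x - indicator E x)\<^sup>2)
      \<le> (\<integral>\<^sup>+ y. ennreal (\<bar>g y\<bar> * p y) \<partial>lborel)"
    using p_nonneg
    by (subst nn_integral_eq_integral)
      (auto intro!: Bochner_Integration.integrable_bound[OF p_int] simp: g_def indicator_def)
  also have "\<dots> = (\<integral>\<^sup>+ u. ennreal (\<bar>indicator E (x - inverse \<rho> *\<^sub>R u) - indicator E x\<bar> * \<phi> u) \<partial>lborel)"
    unfolding p_def g_def by (rule nn_integral_dilate_substitution) (use \<open>\<rho> > 0\<close> in auto)
  finally show ?thesis .
qed

lemma mollification_error_le:
  fixes \<phi> :: "real^2 \<Rightarrow> real" and E :: "(real^2) set"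
  assumes \<phi>[measurable]: "\<phi> \<in> borel_measurable borel" and \<phi>_nonneg: "\<And>y. \<phi> y \<ge> 0"
    and \<phi>_int: "integrable lborel \<phi>" "(\<integral>x. \<phi> x \<partial>lborel) = 1"
    and E[measurable]: "E \<in> sets borel" and "bounded E" and "\<rho> > 0"
  shows "(\<integral>\<^sup>+ x. ennreal ((conv (indicator E) (dilate \<rho> \<phi>) x - indicator E x)\<^sup>2) \<partial>lebesgue)
    \<le> (\<integral>\<^sup>+ u. ennreal (\<phi> u * translation_defect E (inverse \<rho> *\<^sub>R u)) \<partial>lborel)"
proof -
  have "(\<integral>\<^sup>+ x. ennreal ((conv (indicator E) (dilate \<rho> \<phi>) x - indicator E x)\<^sup>2) \<partial>lebesgue)
      \<le> (\<integral>\<^sup>+ x. \<integral>\<^sup>+ u. ennreal (\<bar>indicator E (x - inverse \<rho> *\<^sub>R u) - indicator E x\<bar> * \<phi> u) \<partial>lborel \<partial>lborel)"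
    unfolding nn_integral_completion
    by (intro nn_integral_mono mollification_pointwise_error_le[OF \<phi> \<phi>_nonneg \<phi>_int E \<open>\<rho> > 0\<close>])
  also have "\<dots> = (\<integral>\<^sup>+ u. \<integral>\<^sup>+ x. ennreal (\<bar>indicator E (x - inverse \<rho> *\<^sub>R u) - indicator E x\<bar> * \<phi> u) \<partial>lborel \<partial>lborel)"
    by (rule lborel_pair.Fubini'[symmetric]) measurable
  also have "\<dots> = (\<integral>\<^sup>+ u. ennreal (\<phi> u * translation_defect E (inverse \<rho> *\<^sub>R u)) \<partial>lborel)"
  proof (intro nn_integral_cong)
    fix u :: "real^2"
    have "(\<integral>\<^sup>+ x. ennreal (\<bar>indicator E (x - inverse \<rho> *\<^sub>R u) - indicator E x\<bar> * \<phi> u) \<partial>lborel)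
        = ennreal (\<phi> u) * (\<integral>\<^sup>+ x. ennreal \<bar>indicator E (x - inverse \<rho> *\<^sub>R u) - indicator E x :: real\<bar> \<partial>lborel)"
      using \<phi>_nonneg by (subst nn_integral_cmult[symmetric]) (auto simp: ennreal_mult' mult.commute)
    also have "\<dots> = ennreal (\<phi> u * translation_defect E (inverse \<rho> *\<^sub>R u))"
      unfolding translation_defect_def using \<phi>_nonneg
      by (subst nn_integral_eq_integral[OF integrable_translation_defect[OF E \<open>bounded E\<close>]])
        (auto simp: ennreal_mult)
    finally show "(\<integral>\<^sup>+ x. ennreal (\<bar>indicator E (x - inverse \<rho> *\<^sub>R u) - indicator E x\<bar> * \<phi> u) \<partial>lborel)
        = ennreal (\<phi> u * translation_defect E (inverse \<rho> *\<^sub>R u))" .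
  qed
  finally show ?thesis .
qed

lemma borel_measurable_translation_defect [measurable]:
  fixes E :: "'a::euclidean_space set"
  assumes [measurable]: "E \<in> sets borel"
  shows "translation_defect E \<in> borel_measurable borel"
  unfolding translation_defect_def by measurable

lemma integral_rescaled_translation_defect_LIMSEQ_0:
  fixes \<phi> :: "'a::euclidean_space \<Rightarrow> real" and E :: "'a set"
  assumes \<phi>: "integrable lborel \<phi>" and "jordan_borel E"
  shows "integrable lborel (\<lambda>u. \<phi> u * translation_defect E (inverse (real n) *\<^sub>R u))"
    and "(\<lambda>n. \<integral>u. \<phi> u * translation_defect E (inverse (real n) *\<^sub>R u) \<partial>lborel) \<longlonglongrightarrow> 0"
proof -
  have E[measurable]: "E \<in> sets borel" and "bounded E"
    using assms by (auto simp: jordan_borel_def)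
  have [measurable]: "\<phi> \<in> borel_measurable lborel"
    using \<phi> by auto
  define s where "s n u = \<phi> u * translation_defect E (inverse (real n) *\<^sub>R u)" for n u
  have s_meas: "s n \<in> borel_measurable lborel" for n
    unfolding s_def by measurable
  have w_int: "integrable lborel (\<lambda>u. 2 * measure lborel E * norm (\<phi> u))"
    using \<phi> by simp
  have s_dominated: "AE u in lborel. norm (s n u) \<le> 2 * measure lborel E * norm (\<phi> u)" for n
  proof (rule AE_I2)
    fix u
    have "norm (s n u) = \<bar>\<phi> u\<bar> * translation_defect E (inverse (real n) *\<^sub>R u)"
      by (simp add: s_def abs_mult abs_of_nonneg[OF translation_defect_nonneg])
    also have "\<dots> \<le> \<bar>\<phi> u\<bar> * (2 * measure lborel E)"
      by (intro mult_left_mono translation_defect_le[OF E \<open>bounded E\<close>]) simp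
    finally show "norm (s n u) \<le> 2 * measure lborel E * norm (\<phi> u)"
      by (simp add: mult.commute)
  qed
  have defect_cont: "isCont (translation_defect E) 0"
    using translation_defect_tendsto_0[OF \<open>jordan_borel E\<close>]
    by (simp add: isCont_def translation_defect_def)
  have s_lim: "AE u in lborel. (\<lambda>n. s n u) \<longlonglongrightarrow> 0"
  proof (rule AE_I2)
    fix u :: 'a
    have "(\<lambda>n. inverse (real n) *\<^sub>R u) \<longlonglongrightarrow> 0"
      using tendsto_scaleR[OF lim_inverse_n tendsto_const, of u] by simp
    then have "(\<lambda>n. s n u) \<longlonglongrightarrow> \<phi> u * translation_defect E 0"
      unfolding s_def by (intro tendsto_mult tendsto_const isCont_tendsto_compose[OF defect_cont])
    then show "(\<lambda>n. s n u) \<longlonglongrightarrow> 0"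
      by (simp add: translation_defect_def)
  qed
  show "integrable lborel (\<lambda>u. \<phi> u * translation_defect E (inverse (real n) *\<^sub>R u))"
    using integrable_dominated_convergence2[OF _ s_meas w_int s_lim s_dominated] by (simp add: s_def)
  have "(\<lambda>n. \<integral>u. s n u \<partial>lborel) \<longlonglongrightarrow> (\<integral>u. 0 \<partial>(lborel :: 'a measure))"
    by (rule integral_dominated_convergence[OF _ s_meas w_int s_lim s_dominated]) simp
  then show "(\<lambda>n. \<integral>u. \<phi> u * translation_defect E (inverse (real n) *\<^sub>R u) \<partial>lborel) \<longlonglongrightarrow> 0"
    by (simp add: s_def)
qed

lemma mollification_error_small:
  fixes \<phi> :: "real^2 \<Rightarrow> real" and E :: "(real^2) set"
  assumes \<phi>[measurable]: "\<phi> \<in> borel_measurable borel" and \<phi>_nonneg: "\<And>y. \<phi> y \<ge> 0"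
    and \<phi>_int: "integrable lborel \<phi>" "(\<integral>x. \<phi> x \<partial>lborel) = 1"
    and "jordan_borel E" and "\<epsilon> > 0"
  shows "\<exists>\<rho>>0. (\<integral>\<^sup>+ x. ennreal ((conv (indicator E) (dilate \<rho> \<phi>) x - indicator E x)\<^sup>2) \<partial>lebesgue)
    \<le> ennreal \<epsilon>"
proof -
  have E: "E \<in> sets borel" and "bounded E"
    using assms by (auto simp: jordan_borel_def)
  define s where "s n u = \<phi> u * translation_defect E (inverse (real n) *\<^sub>R u)" for n u
  note s_int = integral_rescaled_translation_defect_LIMSEQ_0(1)[OF \<phi>_int(1) \<open>jordan_borel E\<close>]
  have "\<forall>\<^sub>F n in sequentially. (\<integral>u. s n u \<partial>lborel) < \<epsilon>"
    unfolding s_def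
    by (rule order_tendstoD(2)[OF integral_rescaled_translation_defect_LIMSEQ_0(2) \<open>\<epsilon> > 0\<close>])
      (fact \<phi>_int(1) \<open>jordan_borel E\<close>)+
  then obtain N where N: "\<And>n. n \<ge> N \<Longrightarrow> (\<integral>u. s n u \<partial>lborel) < \<epsilon>"
    unfolding eventually_sequentially by blast
  define n where "n = Suc N"
  have "(\<integral>\<^sup>+ u. ennreal (s n u) \<partial>lborel) = ennreal (\<integral>u. s n u \<partial>lborel)"
    unfolding s_def
    by (intro nn_integral_eq_integral s_int AE_I2 mult_nonneg_nonneg \<phi>_nonneg translation_defect_nonneg)
  also have "\<dots> \<le> ennreal \<epsilon>"
    using N[of n] by (intro ennreal_leI) (simp add: n_def)
  finally have "(\<integral>\<^sup>+ u. ennreal (s n u) \<partial>lborel) \<le> ennreal \<epsilon>" .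
  moreover have "real n > 0"
    by (simp add: n_def)
  ultimately show ?thesis
    using mollification_error_le[OF \<phi> \<phi>_nonneg \<phi>_int E \<open>bounded E\<close>, of "real n"]
    unfolding s_def by (blast intro: order_trans)
qed

section \<open>Choice of the frequencies and radii\<close>

lemma exists_far_ball_in_ball:
  fixes c :: "'a::euclidean_space"
  assumes "t \<ge> 0" and "r \<ge> \<rho> + t"
  shows "\<exists>\<xi>. norm \<xi> \<ge> t \<and> ball \<xi> \<rho> \<subseteq> ball c r"
proof -
  obtain b :: 'a where "b \<in> Basis"
    using nonempty_Basis by blast
  define v where "v = t *\<^sub>R b"
  have "norm v = t"
    using \<open>t \<ge> 0\<close> \<open>b \<in> Basis\<close> by (simp add: v_def)
  have "2 * t = norm ((c + v) - (c - v))"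
    using \<open>norm v = t\<close> by (simp add: scaleR_2[symmetric])
  also have "\<dots> \<le> norm (c + v) + norm (c - v)"
    by (rule norm_triangle_ineq4)
  finally have "norm (c + v) \<ge> t \<or> norm (c - v) \<ge> t"
    by linarith
  then obtain \<xi> where "\<xi> = c + v \<or> \<xi> = c - v" and "norm \<xi> \<ge> t"
    by blast
  moreover from this have "dist c \<xi> = t"
    using \<open>norm v = t\<close> by (auto simp: dist_norm)
  ultimately show ?thesis
    using assms by (intro exI[of _ \<xi>]) (auto simp: ball_subset_ball_iff dist_commute)
qed


definition admissible_frequency ::
    "(real^2 \<Rightarrow> real) \<Rightarrow> real \<Rightarrow> (real^2) set \<Rightarrow> (real^2) set \<Rightarrow> real^2 \<Rightarrow> real \<Rightarrow> bool" where
  "admissible_frequency \<phi> \<epsilon> S E \<xi> \<rho> \<longleftrightarrow> \<rho> > 0 \<and> \<xi> \<noteq> 0 \<and> ball \<xi> \<rho> \<subseteq> S \<and>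
     (\<integral>\<^sup>+ x. ennreal ((conv (indicator E) (dilate \<rho> \<phi>) x - indicator E x)\<^sup>2) \<partial>lebesgue) \<le> ennreal \<epsilon> \<and>
     (\<integral>x\<in>E. \<bar>cos (\<xi> \<bullet> x)\<bar> \<partial>lebesgue) \<ge> measure lebesgue E / 3"

lemma exists_admissible_frequency:
  fixes \<phi> :: "real^2 \<Rightarrow> real" and E S :: "(real^2) set"
  assumes \<phi>: "\<phi> \<in> borel_measurable borel" "\<And>y. \<phi> y \<ge> 0"
      "integrable lborel \<phi>" "(\<integral>x. \<phi> x \<partial>lborel) = 1"
    and "jordan_borel E" and "\<epsilon> > 0"
    and S: "\<And>R. \<exists>c r. r \<ge> R \<and> ball c r \<subseteq> S"
  shows "\<exists>\<xi> \<rho>. admissible_frequency \<phi> \<epsilon> S E \<xi> \<rho>"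
proof -
  obtain \<rho> where "\<rho> > 0" and \<rho>:
      "(\<integral>\<^sup>+ x. ennreal ((conv (indicator E) (dilate \<rho> \<phi>) x - indicator E x)\<^sup>2) \<partial>lebesgue) \<le> ennreal \<epsilon>"
    using mollification_error_small[OF \<phi> \<open>jordan_borel E\<close> \<open>\<epsilon> > 0\<close>] by blast
  obtain T where T: "\<And>\<xi>. norm \<xi> \<ge> T \<Longrightarrow> (\<integral>x\<in>E. \<bar>cos (\<xi> \<bullet> x)\<bar> \<partial>lebesgue) \<ge> measure lebesgue E / 3"
    using set_integral_abs_cos_eventually_ge[OF \<open>jordan_borel E\<close>]
    unfolding eventually_at_infinity by blast
  define t where "t = \<bar>T\<bar> + 1"
  obtain c r where "r \<ge> \<rho> + t" and "ball c r \<subseteq> S"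
    using S by blast
  then obtain \<xi> where "norm \<xi> \<ge> t" and "ball \<xi> \<rho> \<subseteq> S"
    using exists_far_ball_in_ball[where t=t and r=r and \<rho>=\<rho> and c=c] by (auto simp: t_def)
  then have "\<xi> \<noteq> 0" and "norm \<xi> \<ge> T"
    by (auto simp: t_def)
  then show ?thesis
    using \<open>\<rho> > 0\<close> \<rho> T \<open>ball \<xi> \<rho> \<subseteq> S\<close> unfolding admissible_frequency_def by blast
qed

lemma length_recursive_choice:
  fixes P :: "('a list \<Rightarrow> 'b) \<Rightarrow> 'a list \<Rightarrow> 'b \<Rightarrow> bool"
  assumes local: "\<And>f g w y. (\<And>v. length v < length w \<Longrightarrow> f v = g v) \<Longrightarrow> P f w y \<Longrightarrow> P g w y"
    and step: "\<And>f w. (\<And>v. length v < length w \<Longrightarrow> P f v (f v)) \<Longrightarrow> \<exists>y. P f w y"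
  shows "\<exists>f. \<forall>w. P f w (f w)"
proof -
  define stage :: "nat \<Rightarrow> 'a list \<Rightarrow> 'b" where
    "stage = rec_nat (\<lambda>_. undefined) (\<lambda>n g w. if length w < n then g w else (SOME y. P g w y))"
  have stage_Suc: "stage (Suc n) w = (if length w < n then stage n w else (SOME y. P (stage n) w y))"
    for n w by (simp add: stage_def)
  define f where "f w = stage (Suc (length w)) w" for w
  have stable: "stage n v = f v" if "length v < n" for n v
    using that
  proof (induction n)
    case (Suc n)
    then show ?case
      by (cases "length v < n") (auto simp: stage_Suc f_def less_Suc_eq)
  qed simp
  have "P f w (f w)" for w
  proof (induction w rule: length_induct)
    case (1 w)
    let ?g = "stage (length w)"
    have agree: "f v = ?g v" if "length v < length w" for v
      using stable[OF that] by simp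
    have "P ?g v (?g v)" if "length v < length w" for v
      using local[OF _ "1.IH"[rule_format, OF that]] agree that by (metis order.strict_trans)
    then have "P ?g w (SOME y. P ?g w y)"
      using step[of w ?g] by (metis someI_ex)
    then have "P ?g w (f w)"
      by (simp add: f_def stage_Suc)
    then show ?case
      using local[of w ?g f] agree by metis
  qed
  then show ?thesis
    by blast
qed

lemma exists_admissible_frequencies:
  fixes \<phi> :: "real^2 \<Rightarrow> real" and E0 :: "(real^2) set" and T :: "bool list \<Rightarrow> (real^2) set"
  assumes \<phi>: "\<phi> \<in> borel_measurable borel" "\<And>y. \<phi> y \<ge> 0"
      "integrable lborel \<phi>" "(\<integral>x. \<phi> x \<partial>lborel) = 1"
    and "jordan_borel E0" and "\<epsilon> > 0"
    and T: "\<And>w R. length w < n \<Longrightarrow> \<exists>c r. r \<ge> R \<and> ball c r \<subseteq> T w"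
  shows "\<exists>\<xi> \<rho>. \<forall>w. length w < n \<longrightarrow>
    admissible_frequency \<phi> \<epsilon> (T w) (sign_cell E0 \<xi> w) (\<xi> w) (\<rho> w)"
proof -
  define admissible_at where "admissible_at f w p \<longleftrightarrow> (length w < n \<longrightarrow>
      admissible_frequency \<phi> \<epsilon> (T w) (sign_cell E0 (fst \<circ> f) w) (fst p) (snd p))"
    for f :: "bool list \<Rightarrow> (real^2) \<times> real" and w p
  have "\<exists>f. \<forall>w. admissible_at f w (f w)"
  proof (rule length_recursive_choice)
    show "admissible_at g w p" if "\<And>v. length v < length w \<Longrightarrow> f v = g v" "admissible_at f w p"
      for f g w p
      using that sign_cell_cong[of w "fst \<circ> f" "fst \<circ> g"] by (simp add: admissible_at_def)
    show "\<exists>p. admissible_at f w p"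
      if prev: "\<And>v. length v < length w \<Longrightarrow> admissible_at f v (f v)" for f w
    proof (cases "length w < n")
      case True
      have "jordan_borel (sign_cell E0 (fst \<circ> f) w)"
        using prev True \<open>jordan_borel E0\<close>
        by (intro jordan_borel_sign_cell) (auto simp: admissible_at_def admissible_frequency_def)
      then show ?thesis
        using exists_admissible_frequency[OF \<phi> _ \<open>\<epsilon> > 0\<close> T[OF True]]
        by (auto simp: admissible_at_def)
    qed (simp add: admissible_at_def)
  qed
  then obtain f where "\<And>w. admissible_at f w (f w)"
    by blast
  then show ?thesis
    by (intro exI[of _ "fst \<circ> f"] exI[of _ "snd \<circ> f"]) (simp add: admissible_at_def)
qed

lemma borel_measurable_schwartz:
  assumes "schwartz f"
  shows "f \<in> borel_measurable borel"
proof -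
  have "\<forall>x. f differentiable (at x)"
    using assms partial_derivs.base[of f] unfolding schwartz_def by blast
  then show ?thesis
    by (intro borel_measurable_continuous_onI differentiable_imp_continuous_on)
      (simp add: differentiable_on_def)
qed

lemma sum_power2_desc:
  "L \<le> m \<Longrightarrow> (\<Sum>i<L. (2::nat) ^ (m - 1 - i)) + 2 ^ (m - L) = 2 ^ m"
proof (induction L)
  case (Suc L)
  then have "(2::nat) ^ (m - L) = 2 ^ (m - 1 - L) + 2 ^ (m - Suc L)"
    by (metis Suc_diff_Suc Suc_le_lessD diff_Suc_eq_diff_pred mult_2 power_Suc)
  with Suc show ?case
    by simp
qed simp

lemma tau_range:
  assumes "length w < mu"
  shows "tau mu w \<in> {1..2 ^ mu - 1}"
proof -
  define a where "a = (\<Sum>i<length w. (if w ! i then 1 else 0) * (2::nat) ^ (mu - 1 - i))"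
  define b where "b = (\<Sum>i<length w. (2::nat) ^ (mu - 1 - i))"
  define c where "c = (2::nat) ^ (mu - length w - 1)"
  have "a \<le> b"
    unfolding a_def b_def by (intro sum_mono) auto
  moreover have "b + 2 * c = 2 ^ mu"
    using sum_power2_desc[of "length w" mu] assms unfolding b_def c_def
    by (metis Suc_diff_Suc diff_Suc_1 less_imp_le_nat power_Suc)
  moreover have "1 \<le> c"
    by (simp add: c_def)
  moreover have "tau mu w = a + c"
    by (simp add: tau_def a_def c_def)
  ultimately show ?thesis
    by simp
qed

theorem lemma8p6:
  fixes mu :: nat and S :: "nat \<Rightarrow> (real^2) set" and phi :: "real^2 \<Rightarrow> real"
  assumes mu_pos: "mu \<ge> 1"
    and phi_schwartz: "schwartz phi"
    and phi_nonneg: "\<forall>x. phi x \<ge> 0"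
    and phi_int: "integrable lborel phi" "(\<integral>x. phi x \<partial>lborel) = 1"
    and phi_fourier: "closure {xi. fourier phi xi \<noteq> 0} \<subseteq> ball 0 1"
    and S_disj: "\<forall>i\<in>{1..2^mu - 1}. \<forall>j\<in>{1..2^mu - 1}. i \<noteq> j \<longrightarrow> S i \<inter> S j = {}"
    and S_balls: "\<forall>i\<in>{1..2^mu - 1}. \<forall>R. \<exists>c r. r \<ge> R \<and> ball c r \<subseteq> S i"
  shows "\<exists>(E :: bool list \<Rightarrow> (real^2) set) (xi :: bool list \<Rightarrow> real^2) (rho :: bool list \<Rightarrow> real).
    (\<forall>w\<in>W mu. E w \<in> sets lebesgue \<and> rho w > 0 \<and> E w \<subseteq> cbox 0 One) \<and>
    E [] = cbox 0 One \<and>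
    (\<forall>w. length w + 2 \<le> mu \<longrightarrow>
        E w = E (w @ [False]) \<union> E (w @ [True]) \<and> E (w @ [False]) \<inter> E (w @ [True]) = {}) \<and>
    (\<forall>l<mu. (\<Union>w\<in>{w. length w = l}. E w) = cbox 0 One \<and>
        (\<forall>v w. length v = l \<and> length w = l \<and> v \<noteq> w \<longrightarrow> E v \<inter> E w = {})) \<and>
    (\<forall>x\<in>cbox 0 One. (\<Sum>w\<in>W mu. indicator (E w) x) = (real mu)) \<and>
    (\<forall>w\<in>W mu.
        (\<integral>\<^sup>+ x. ennreal ((conv (indicator (E w)) (dilate (rho w) phi) x - indicator (E w) x)\<^sup>2) \<partial>lebesgue)
          \<le> ennreal ((2 powr (- (real mu + 10)))\<^sup>2) \<and>
        (\<integral>x\<in>E w. \<bar>cos (xi w \<bullet> x)\<bar> \<partial>lebesgue) \<ge> measure lebesgue (E w) / 3 \<and>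
        ball (xi w) (rho w) \<subseteq> S (tau mu w)) \<and>
    (\<forall>w. length w + 2 \<le> mu \<longrightarrow>
        (\<forall>x\<in>E (w @ [False]). cos (xi w \<bullet> x) \<ge> 0) \<and>
        (\<forall>x\<in>E (w @ [True]). cos (xi w \<bullet> x) < 0))"
proof -
  \<comment> \<open>The construction only needs \<open>\<phi>\<close> to be a measurable probability density.\<close>
  define \<epsilon> where "\<epsilon> = (2 powr (- (real mu + 10)))\<^sup>2"
  have "\<epsilon> > 0"
    by (simp add: \<epsilon>_def)
  have big_balls: "\<exists>c r. r \<ge> R \<and> ball c r \<subseteq> S (tau mu w)" if "length w < mu" for w R
    using S_balls tau_range[OF that] by blast
  obtain \<xi> \<rho> where adm: "\<And>w. length w < mu \<Longrightarrow>
      admissible_frequency phi \<epsilon> (S (tau mu w)) (sign_cell (cbox 0 One) \<xi> w) (\<xi> w) (\<rho> w)"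
    using exists_admissible_frequencies[where n=mu and T="\<lambda>w. S (tau mu w)",
        OF borel_measurable_schwartz[OF phi_schwartz] phi_nonneg[rule_format] phi_int jordan_borel_cbox[of 0 One] \<open>\<epsilon> > 0\<close> big_balls]
    by blast
  have "jordan_borel (sign_cell (cbox 0 One) \<xi> w)" if "length w < mu" for w
    using adm that by (intro jordan_borel_sign_cell jordan_borel_cbox) (auto simp: admissible_frequency_def)
  moreover have "W mu = {w. length w < mu}"
    using mu_pos by (auto simp: W_def)
  ultimately show ?thesis
    using adm
    by (intro exI[of _ "sign_cell (cbox 0 One) \<xi>"] exI[of _ \<xi>] exI[of _ \<rho>] conjI)
      (auto dest: subsetD[OF sign_cell_subset] simp: sign_cell_snoc Union_sign_cell sign_cell_disjoint
        sum_indicator_sign_cell admissible_frequency_def jordan_borel_def \<epsilon>_def)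
qed

end
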